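(* Let $\mathbf{D}^\pm_{EC}$ be entropy conservative fluctuations (satisfying (C1)–(C5)) and let $\mathbf{Q}:\mathcal{U}\times\mathcal{U}\to\mathbb{R}^{n\times n}$ satisfy $[\![\mathbf{w}]\!]^T\mathbf{Q}(\mathbf{u}_L,\mathbf{u}_R)[\![\mathbf{u}]\!]\ge 0$ for all $\mathbf{u}_L,\mathbf{u}_R\in\mathcal{U}$. Define the entropy stable fluctuations $\mathbf{D}^-_{ES}=\mathbf{D}^-_{EC}-\mathbf{Q}[\![\mathbf{u}]\!]$ and $\mathbf{D}^+_{ES}=\mathbf{D}^+_{EC}+\mathbf{Q}[\![\mathbf{u}]\!]$ (all evaluated at $(\mathbf{u}_L,\mathbf{u}_R)$). Consider the scheme $$\omega_i\frac{\Delta x_k}{2}\dot{\mathbf{U}}^k_i+\omega_i\sum_{m=0}^N 2\mathcal{D}_{im}\mathbf{D}^-_{EC}(\mathbf{U}^k_i,\mathbf{U}^k_m)+\delta_{i0}\mathbf{D}^+_{ES}(\mathbf{U}^{k-1}_N,\mathbf{U}^k_0)+\delta_{iN}\mathbf{D}^-_{ES}(\mathbf{U}^k_N,\mathbf{U}^{k+1}_0)=0,\quad i=0,\dots,N,$$ with time-differentiable solution. Then on each element $$\sum_{i=0}^N\omega_i\frac{\Delta x_k}{2}\frac{dS(\mathbf{U}^k_i)}{dt}\le\mathcal{F}(\mathbf{U}^{k-1}_N,\mathbf{U}^k_0)-\mathcal{F}(\mathbf{U}^k_N,\mathbf{U}^{k+1}_0),$$ where $\mathcal{F}(\mathbf{u}_L,\mathbf{u}_R):=q(\mathbf{u}_L)+\mathbf{w}(\mathbf{u}_L)^T\mathbf{D}^-_{EC}(\mathbf{u}_L,\mathbf{u}_R)-\tfrac12(\mathbf{w}_L+\mathbf{w}_R)^T\mathbf{Q}(\mathbf{u}_L,\mathbf{u}_R)[\![\mathbf{u}]\!]$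 is a numerical entropy flux consistent with $q$, i.e. $\mathcal{F}(\mathbf{u},\mathbf{u})=q(\mathbf{u})$.
   Context: System: $\mathbf{u}_t+\mathbf{f}(\mathbf{u})_x+\mathbf{B}(\mathbf{u})\mathbf{u}_x=0$, $\mathbf{u}\in\mathcal{U}\subset\mathbb{R}^n$, generalized Jacobian $\mathbf{A}:=\mathbf{f}_{\mathbf{u}}+\mathbf{B}$. Entropy pair: strictly convex $C^2$ $S$ and entropy flux $q$ with $q_{\mathbf{u}}=\mathbf{w}^T(\mathbf{f}_{\mathbf{u}}+\mathbf{B})$, $\mathbf{w}(\mathbf{u}):=S_{\mathbf{u}}(\mathbf{u})$. Notation: $[\![\cdot]\!]=(\cdot)_R-(\cdot)_L$, $\mathbf{w}_L=\mathbf{w}(\mathbf{u}_L)$, $q_L=q(\mathbf{u}_L)$, etc. EC fluctuation conditions for $\mathbf{D}^\pm$, for all $\mathbf{u},\mathbf{u}_L,\mathbf{u}_R$ and a given family of paths $\Phi(s;\mathbf{u}_L,\mathbf{u}_R)$ (Lipschitz, $\Phi(0;\cdot)=\mathbf{u}_L$, $\Phi(1;\cdot)=\mathbf{u}_R$, $\Phi(s;\mathbf{u},\mathbf{u})=\mathbf{u}$): (C1) $\mathbf{D}^\pm(\mathbf{u},\mathbf{u})=0$; (C2) $\mathbf{D}^-(\mathbf{u}_L,\mathbf{u}_R)+\mathbf{D}^+(\mathbf{u}_L,\mathbf{u}_R)=\int_0^1\mathbf{A}(\Phi(s;\mathbf{u}_L,\mathbf{u}_R))\partial_s\Phi(s;\mathbf{u}_L,\mathbf{u}_R)\,ds$;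 (C3) $\mathbf{D}^-(\mathbf{u}_L,\mathbf{u}_R)+\mathbf{D}^+(\mathbf{u}_R,\mathbf{u}_L)=0$; (C4) $\mathbf{w}_L^T\mathbf{D}^-(\mathbf{u}_L,\mathbf{u}_R)+\mathbf{w}_R^T\mathbf{D}^+(\mathbf{u}_L,\mathbf{u}_R)=q_R-q_L$; (C5) $\frac{\partial\mathbf{D}^-(\mathbf{u}_L,\mathbf{u}_R)}{\partial\mathbf{u}_R}\big|_{\mathbf{u}_R=\mathbf{u}_L}=\frac12\mathbf{A}(\mathbf{u}_L)$. Discretization: elements $\Omega^k=[x_{k-1},x_k]$ of width $\Delta x_k$ affinely mapped to $[-1,1]$; nodal values $\mathbf{U}^k_i$ at LGL nodes $-1=\xi_0<\dots<\xi_N=1$ with LGL weights $\omega_i$; $\mathcal{D}_{ij}=l_j'(\xi_i)$ for the Lagrange basis $l_j$; summation-by-parts property $\mathcal{Q}+\mathcal{Q}^T=\mathcal{B}$ with $\mathcal{Q}_{ij}=\omega_i\mathcal{D}_{ij}$, $\mathcal{B}_{ij}=\delta_{iN}\delta_{jN}-\delta_{i0}\delta_{j0}$. *)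

theory Defs
  imports "HOL-Analysis.Analysis"
begin

definition strictly_convex_on :: "'a::real_vector set \<Rightarrow> ('a \<Rightarrow> real) \<Rightarrow> bool" where
  "strictly_convex_on U S \<longleftrightarrow>
     (\<forall>x\<in>U. \<forall>y\<in>U. \<forall>t::real. x \<noteq> y \<and> 0 < t \<and> t < 1 \<and> (1 - t) *\<^sub>R x + t *\<^sub>R y \<in> U
        \<longrightarrow> S ((1 - t) *\<^sub>R x + t *\<^sub>R y) < (1 - t) * S x + t * S y)"

fun legendre :: "nat \<Rightarrow> real \<Rightarrow> real" where
  "legendre 0 x = 1"
| "legendre (Suc 0) x = x"
| "legendre (Suc (Suc n)) x =
     ((2 * real n + 3) * x * legendre (Suc n) x - (real n + 1) * legendre n x) / (real n + 2)"

definition LGL_nodes :: "nat \<Rightarrow> (nat \<Rightarrow> real) \<Rightarrow> bool" where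
  "LGL_nodes N \<xi> \<longleftrightarrow> \<xi> 0 = -1 \<and> \<xi> N = 1 \<and> strict_mono_on {0..N} \<xi> \<and>
     \<xi> ` {1..<N} = {x. deriv (legendre N) x = 0}"

definition LGL_weight :: "nat \<Rightarrow> (nat \<Rightarrow> real) \<Rightarrow> nat \<Rightarrow> real" where
  "LGL_weight N \<xi> i = 2 / (real N * (real N + 1) * (legendre N (\<xi> i))\<^sup>2)"

definition lagrange_basis :: "nat \<Rightarrow> (nat \<Rightarrow> real) \<Rightarrow> nat \<Rightarrow> real \<Rightarrow> real" where
  "lagrange_basis N \<xi> j x = (\<Prod>m\<in>{0..N} - {j}. (x - \<xi> m) / (\<xi> j - \<xi> m))"

definition diff_matrix :: "nat \<Rightarrow> (nat \<Rightarrow> real) \<Rightarrow> nat \<Rightarrow> nat \<Rightarrow> real" where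
  "diff_matrix N \<xi> i j = deriv (lagrange_basis N \<xi> j) (\<xi> i)"

definition bdry_matrix :: "nat \<Rightarrow> nat \<Rightarrow> nat \<Rightarrow> real" where
  "bdry_matrix N i j = (if i = N \<and> j = N then 1 else 0) - (if i = 0 \<and> j = 0 then 1 else 0)"

definition DES_minus ::
  "(real^'a::finite \<Rightarrow> real^'a \<Rightarrow> real^'a) \<Rightarrow> (real^'a \<Rightarrow> real^'a \<Rightarrow> real^'a^'a)
     \<Rightarrow> real^'a \<Rightarrow> real^'a \<Rightarrow> real^'a" where
  "DES_minus Dm Q uL uR = Dm uL uR - Q uL uR *v (uR - uL)"

definition DES_plus ::
  "(real^'a::finite \<Rightarrow> real^'a \<Rightarrow> real^'a) \<Rightarrow> (real^'a \<Rightarrow> real^'a \<Rightarrow> real^'a^'a)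
     \<Rightarrow> real^'a \<Rightarrow> real^'a \<Rightarrow> real^'a" where
  "DES_plus Dp Q uL uR = Dp uL uR + Q uL uR *v (uR - uL)"

definition num_entropy_flux ::
  "(real^'a::finite \<Rightarrow> real) \<Rightarrow> (real^'a \<Rightarrow> real^'a) \<Rightarrow> (real^'a \<Rightarrow> real^'a \<Rightarrow> real^'a)
     \<Rightarrow> (real^'a \<Rightarrow> real^'a \<Rightarrow> real^'a^'a) \<Rightarrow> real^'a \<Rightarrow> real^'a \<Rightarrow> real" where
  "num_entropy_flux q w Dm Q uL uR =
     q uL + w uL \<bullet> Dm uL uR - (1/2) * ((w uL + w uR) \<bullet> (Q uL uR *v (uR - uL)))"

end

theory Submission
  imports Defs "HOL-Computational_Algebra.Polynomial"
begin

(* Contract the nodal equations with the entropy variables w(U_i). The time-derivative term becomes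
   the discrete entropy rate. The volume term telescopes to q(U_N) - q(U_0): by (C1), (C3), (C4)
   the matrix w(U_i) . D^-(U_i, U_m) is skew-symmetric up to the potential q, and the SBP property
   together with the zero row sums of D (the Lagrange basis is a partition of unity) sums such a
   matrix against 2 omega_i D_im to the difference of the potential at the end nodes. At the two
   interfaces, (C4) and the dissipativity of Q bound the contracted entropy stable fluctuations by
   the numerical entropy flux. *)

definition lagrange_poly :: "nat \<Rightarrow> (nat \<Rightarrow> real) \<Rightarrow> nat \<Rightarrow> real poly" where
  "lagrange_poly N \<xi> j =
     smult (inverse (\<Prod>m\<in>{0..N} - {j}. \<xi> j - \<xi> m)) (\<Prod>m\<in>{0..N} - {j}. [:- \<xi> m, 1:])"

lemma poly_lagrange_poly: "poly (lagrange_poly N \<xi> j) = lagrange_basis N \<xi> j"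
  unfolding lagrange_poly_def lagrange_basis_def poly_smult poly_prod prod_dividef
  by (rule ext) (simp add: field_simps)

lemma degree_lagrange_poly:
  assumes "j \<le> N"
  shows "degree (lagrange_poly N \<xi> j) \<le> N"
proof -
  have "degree (lagrange_poly N \<xi> j) \<le> degree (\<Prod>m\<in>{0..N} - {j}. [:- \<xi> m, 1:])"
    unfolding lagrange_poly_def by (rule degree_smult_le)
  also have "\<dots> \<le> (\<Sum>m\<in>{0..N} - {j}. degree [:- \<xi> m, 1:])"
    using degree_prod_sum_le[of "{0..N} - {j}" "\<lambda>m. [:- \<xi> m, 1:]"] by (simp add: o_def)
  also have "\<dots> = N"
    using assms by simp
  finally show ?thesis .
qed

lemma lagrange_basis_node:
  assumes "inj_on \<xi> {0..N}" and "i \<le> N" and "j \<le> N"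
  shows "lagrange_basis N \<xi> j (\<xi> i) = (if i = j then 1 else 0)"
proof (cases "i = j")
  case True
  have "\<xi> j \<noteq> \<xi> m" if "m \<in> {0..N} - {j}" for m
    using assms that by (auto simp: inj_on_def)
  then show ?thesis
    using True unfolding lagrange_basis_def by (simp add: prod.neutral)
next
  case False
  then show ?thesis
    using assms(2) unfolding lagrange_basis_def by (auto intro: prod_zero)
qed

lemma sum_lagrange_basis:
  assumes inj: "inj_on \<xi> {0..N}"
  shows "(\<Sum>j\<le>N. lagrange_basis N \<xi> j x) = 1"
proof -
  have "(\<Sum>j\<le>N. lagrange_poly N \<xi> j) = 1"
  proof (rule poly_eqI_degree[where A = "\<xi> ` {0..N}"])
    fix y assume "y \<in> \<xi> ` {0..N}"
    then obtain i where "i \<le> N" "y = \<xi> i" by auto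
    then show "poly (\<Sum>j\<le>N. lagrange_poly N \<xi> j) y = poly 1 y"
      using inj by (simp add: poly_sum poly_lagrange_poly lagrange_basis_node)
  next
    have "card (\<xi> ` {0..N}) = Suc N"
      using inj by (simp add: card_image)
    moreover have "degree (\<Sum>j\<le>N. lagrange_poly N \<xi> j) \<le> N"
      by (rule degree_sum_le) (auto intro: degree_lagrange_poly)
    ultimately show "degree (\<Sum>j\<le>N. lagrange_poly N \<xi> j) < card (\<xi> ` {0..N})"
      and "degree (1 :: real poly) < card (\<xi> ` {0..N})"
      by simp_all
  qed
  then have "poly (\<Sum>j\<le>N. lagrange_poly N \<xi> j) x = 1"
    by simp
  then show ?thesis
    by (simp add: poly_sum poly_lagrange_poly)
qed

lemma sum_diff_matrix_row:
  assumes "inj_on \<xi> {0..N}"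
  shows "(\<Sum>m\<le>N. diff_matrix N \<xi> i m) = 0"
proof -
  have "lagrange_basis N \<xi> m field_differentiable at y" for m y
    unfolding poly_lagrange_poly[symmetric] field_differentiable_def by (blast intro: poly_DERIV)
  then have "(\<Sum>m\<le>N. diff_matrix N \<xi> i m) = deriv (\<lambda>y. \<Sum>m\<le>N. lagrange_basis N \<xi> m y) (\<xi> i)"
    unfolding diff_matrix_def by (simp add: deriv_sum)
  also have "\<dots> = 0"
    using sum_lagrange_basis[OF assms] by simp
  finally show ?thesis .
qed

lemma sum_bdry_matrix:
  fixes h :: "nat \<Rightarrow> nat \<Rightarrow> real"
  shows "(\<Sum>i\<le>N. \<Sum>m\<le>N. bdry_matrix N i m * h i m) = h N N - h 0 0"
proof -
  have "bdry_matrix N i m * h i m =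
      (if m = N then if i = N then h N N else 0 else 0) - (if m = 0 then if i = 0 then h 0 0 else 0 else 0)"
    for i m
    by (simp add: bdry_matrix_def)
  then show ?thesis
    by (simp add: sum_subtractf)
qed

lemma sum_sbp_symmetrized:
  fixes \<omega> :: "nat \<Rightarrow> real" and D h :: "nat \<Rightarrow> nat \<Rightarrow> real"
  assumes sbp: "\<And>i m. i \<le> N \<Longrightarrow> m \<le> N \<Longrightarrow> \<omega> i * D i m + \<omega> m * D m i = bdry_matrix N i m"
  shows "(\<Sum>i\<le>N. \<Sum>m\<le>N. \<omega> i * D i m * h i m) + (\<Sum>i\<le>N. \<Sum>m\<le>N. \<omega> m * D m i * h i m)
    = h N N - h 0 0"
proof -
  have "(\<Sum>i\<le>N. \<Sum>m\<le>N. \<omega> i * D i m * h i m) + (\<Sum>i\<le>N. \<Sum>m\<le>N. \<omega> m * D m i * h i m)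
      = (\<Sum>i\<le>N. \<Sum>m\<le>N. bdry_matrix N i m * h i m)"
    unfolding sum.distrib[symmetric] by (intro sum.cong refl) (simp add: sbp flip: distrib_right)
  then show ?thesis
    by (simp add: sum_bdry_matrix)
qed

lemma sbp_sum_telescopes:
  fixes \<omega> r :: "nat \<Rightarrow> real" and D :: "nat \<Rightarrow> nat \<Rightarrow> real"
  assumes sbp: "\<And>i m. i \<le> N \<Longrightarrow> m \<le> N \<Longrightarrow> \<omega> i * D i m + \<omega> m * D m i = bdry_matrix N i m"
    and rows: "\<And>i. i \<le> N \<Longrightarrow> (\<Sum>m\<le>N. D i m) = 0"
  shows "(\<Sum>i\<le>N. \<Sum>m\<le>N. \<omega> i * D i m * r m) = r N - r 0"
proof -
  have "(\<Sum>i\<le>N. \<Sum>m\<le>N. \<omega> m * D m i * r m) = (\<Sum>m\<le>N. \<omega> m * r m * (\<Sum>i\<le>N. D m i))"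
    by (subst sum.swap) (simp add: sum_distrib_left mult_ac)
  also have "\<dots> = 0"
    by (simp add: rows)
  finally show ?thesis
    using sum_sbp_symmetrized[OF sbp, of "\<lambda>i m. r m"] by simp
qed

lemma sbp_flux_differencing:
  fixes \<omega> r :: "nat \<Rightarrow> real" and D g :: "nat \<Rightarrow> nat \<Rightarrow> real"
  assumes sbp: "\<And>i m. i \<le> N \<Longrightarrow> m \<le> N \<Longrightarrow> \<omega> i * D i m + \<omega> m * D m i = bdry_matrix N i m"
    and rows: "\<And>i. i \<le> N \<Longrightarrow> (\<Sum>m\<le>N. D i m) = 0"
    and skew: "\<And>i m. i \<le> N \<Longrightarrow> m \<le> N \<Longrightarrow> g i m - g m i = r m - r i"
    and diag: "\<And>i. i \<le> N \<Longrightarrow> g i i = 0"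
  shows "(\<Sum>i\<le>N. \<Sum>m\<le>N. \<omega> i * 2 * D i m * g i m) = r N - r 0"
proof -
  have "g N N = 0" "g 0 0 = 0"
    using diag by auto
  then have "(\<Sum>i\<le>N. \<Sum>m\<le>N. \<omega> i * D i m * g m i) = - (\<Sum>i\<le>N. \<Sum>m\<le>N. \<omega> i * D i m * g i m)"
    using sum_sbp_symmetrized[OF sbp, of g] sum.swap[of "\<lambda>i m. \<omega> m * D m i * g i m"] by simp
  then have "(\<Sum>i\<le>N. \<Sum>m\<le>N. \<omega> i * 2 * D i m * g i m)
      = (\<Sum>i\<le>N. \<Sum>m\<le>N. \<omega> i * D i m * g i m) - (\<Sum>i\<le>N. \<Sum>m\<le>N. \<omega> i * D i m * g m i)"
    by (simp add: sum_distrib_left mult_ac)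
  also have "\<dots> = (\<Sum>i\<le>N. \<Sum>m\<le>N. \<omega> i * D i m * (g i m - g m i))"
    by (simp add: right_diff_distrib sum_subtractf)
  also have "\<dots> = (\<Sum>i\<le>N. \<Sum>m\<le>N. \<omega> i * D i m * r m) - (\<Sum>i\<le>N. \<omega> i * r i * (\<Sum>m\<le>N. D i m))"
    by (simp add: skew right_diff_distrib sum_subtractf sum_distrib_left mult_ac)
  also have "\<dots> = r N - r 0"
    by (simp add: rows sbp_sum_telescopes[OF sbp rows])
  finally show ?thesis .
qed

lemma num_entropy_flux_consistent:
  assumes "Dm u u = 0"
  shows "num_entropy_flux q w Dm Q u u = q u"
  using assms by (simp add: num_entropy_flux_def)

lemma num_entropy_flux_ge_DES_plus:
  assumes "w uL \<bullet> Dm uL uR + w uR \<bullet> Dp uL uR = q uR - q uL"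
    and "(w uR - w uL) \<bullet> (Q uL uR *v (uR - uL)) \<ge> 0"
  shows "q uR - w uR \<bullet> DES_plus Dp Q uL uR \<le> num_entropy_flux q w Dm Q uL uR"
  using assms by (simp add: num_entropy_flux_def DES_plus_def inner_add_right inner_add_left
      inner_diff_left field_simps)

lemma num_entropy_flux_le_DES_minus:
  assumes "(w uR - w uL) \<bullet> (Q uL uR *v (uR - uL)) \<ge> 0"
  shows "num_entropy_flux q w Dm Q uL uR \<le> q uL + w uL \<bullet> DES_minus Dm Q uL uR"
  using assms by (simp add: num_entropy_flux_def DES_minus_def inner_diff_right inner_add_left
      inner_diff_left)

lemma deriv_compose_gradient:
  fixes u :: "real \<Rightarrow> 'a::real_inner"
  assumes "u differentiable (at t)" and "(S has_derivative (\<lambda>h. g \<bullet> h)) (at (u t))"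
  shows "deriv (\<lambda>\<tau>. S (u \<tau>)) t = g \<bullet> vector_derivative u (at t)"
proof -
  have "(u has_derivative (\<lambda>h. h *\<^sub>R vector_derivative u (at t))) (at t)"
    using assms(1) unfolding vector_derivative_works has_vector_derivative_def .
  from has_derivative_compose[OF this assms(2)]
  have "((\<lambda>\<tau>. S (u \<tau>)) has_field_derivative g \<bullet> vector_derivative u (at t)) (at t)"
    by (simp add: has_field_derivative_def mult_commute_abs)
  then show ?thesis
    by (rule DERIV_imp_deriv)
qed

lemma nodal_entropy_inequality:
  fixes u V :: "nat \<Rightarrow> real^'n" and uL uR :: "real^'n"
    and M \<omega> :: "nat \<Rightarrow> real" and D :: "nat \<Rightarrow> nat \<Rightarrow> real"
  assumes sbp: "\<And>i m. i \<le> N \<Longrightarrow> m \<le> N \<Longrightarrow> \<omega> i * D i m + \<omega> m * D m i = bdry_matrix N i m"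
    and rows: "\<And>i. i \<le> N \<Longrightarrow> (\<Sum>m\<le>N. D i m) = 0"
    and u_in: "\<And>i. i \<le> N \<Longrightarrow> u i \<in> \<U>" and uL_in: "uL \<in> \<U>" and uR_in: "uR \<in> \<U>"
    and C1: "\<And>v. v \<in> \<U> \<Longrightarrow> Dm v v = 0"
    and C3: "\<And>v v'. v \<in> \<U> \<Longrightarrow> v' \<in> \<U> \<Longrightarrow> Dm v v' + Dp v' v = 0"
    and C4: "\<And>v v'. v \<in> \<U> \<Longrightarrow> v' \<in> \<U> \<Longrightarrow> w v \<bullet> Dm v v' + w v' \<bullet> Dp v v' = q v' - q v"
    and Q_diss: "\<And>v v'. v \<in> \<U> \<Longrightarrow> v' \<in> \<U> \<Longrightarrow> (w v' - w v) \<bullet> (Q v v' *v (v' - v)) \<ge> 0"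
    and scheme: "\<And>i. i \<le> N \<Longrightarrow>
      M i *\<^sub>R V i + (\<Sum>m\<le>N. (\<omega> i * 2 * D i m) *\<^sub>R Dm (u i) (u m))
      + (if i = 0 then DES_plus Dp Q uL (u 0) else 0)
      + (if i = N then DES_minus Dm Q (u N) uR else 0) = 0"
  shows "(\<Sum>i\<le>N. M i * (w (u i) \<bullet> V i))
    \<le> num_entropy_flux q w Dm Q uL (u 0) - num_entropy_flux q w Dm Q (u N) uR"
proof -
  define g where "g i m = w (u i) \<bullet> Dm (u i) (u m)" for i m
  have contracted: "M i * (w (u i) \<bullet> V i) + (\<Sum>m\<le>N. \<omega> i * 2 * D i m * g i m)
      + (if i = 0 then w (u 0) \<bullet> DES_plus Dp Q uL (u 0) else 0)
      + (if i = N then w (u N) \<bullet> DES_minus Dm Q (u N) uR else 0) = 0" if "i \<le> N" for i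
    using arg_cong[OF scheme[OF that], of "inner (w (u i))"]
    by (simp add: inner_add_right inner_sum_right g_def if_distrib[of "inner (w (u i))"] cong: if_cong)
  have "(\<Sum>i\<le>N. M i * (w (u i) \<bullet> V i)) + (\<Sum>i\<le>N. \<Sum>m\<le>N. \<omega> i * 2 * D i m * g i m)
      + w (u 0) \<bullet> DES_plus Dp Q uL (u 0) + w (u N) \<bullet> DES_minus Dm Q (u N) uR = 0"
  proof -
    have "(\<Sum>i\<le>N. M i * (w (u i) \<bullet> V i) + (\<Sum>m\<le>N. \<omega> i * 2 * D i m * g i m)
        + (if i = 0 then w (u 0) \<bullet> DES_plus Dp Q uL (u 0) else 0)
        + (if i = N then w (u N) \<bullet> DES_minus Dm Q (u N) uR else 0)) = 0"
      using contracted by (intro sum.neutral) auto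
    then show ?thesis
      by (simp add: sum.distrib)
  qed
  moreover have "(\<Sum>i\<le>N. \<Sum>m\<le>N. \<omega> i * 2 * D i m * g i m) = q (u N) - q (u 0)"
  proof (rule sbp_flux_differencing[OF sbp rows])
    fix i m assume "i \<le> N" "m \<le> N"
    then have "Dm (u m) (u i) = - Dp (u i) (u m)"
      and "w (u i) \<bullet> Dm (u i) (u m) + w (u m) \<bullet> Dp (u i) (u m) = q (u m) - q (u i)"
      using C3 C4 u_in by (simp_all add: eq_neg_iff_add_eq_0)
    then show "g i m - g m i = q (u m) - q (u i)"
      unfolding g_def by (simp add: inner_minus_right)
  next
    fix i assume "i \<le> N"
    then show "g i i = 0"
      using C1 u_in unfolding g_def by simp
  qed
  moreover have "q (u 0) - w (u 0) \<bullet> DES_plus Dp Q uL (u 0) \<le> num_entropy_flux q w Dm Q uL (u 0)"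
    using u_in uL_in by (intro num_entropy_flux_ge_DES_plus C4 Q_diss) auto
  moreover have "num_entropy_flux q w Dm Q (u N) uR \<le> q (u N) + w (u N) \<bullet> DES_minus Dm Q (u N) uR"
    using u_in uR_in by (intro num_entropy_flux_le_DES_minus Q_diss) auto
  ultimately show ?thesis
    by linarith
qed

theorem theorem4:
  fixes \<U> :: "(real^'n) set"
    and f :: "real^'n \<Rightarrow> real^'n" and Jf :: "real^'n \<Rightarrow> real^'n^'n"
    and B :: "real^'n \<Rightarrow> real^'n^'n" and A :: "real^'n \<Rightarrow> real^'n^'n"
    and S :: "real^'n \<Rightarrow> real" and w :: "real^'n \<Rightarrow> real^'n" and H :: "real^'n \<Rightarrow> real^'n^'n"
    and q :: "real^'n \<Rightarrow> real"
    and \<Phi> :: "real \<Rightarrow> real^'n \<Rightarrow> real^'n \<Rightarrow> real^'n"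
    and Dm Dp :: "real^'n \<Rightarrow> real^'n \<Rightarrow> real^'n"
    and Q :: "real^'n \<Rightarrow> real^'n \<Rightarrow> real^'n^'n"
    and N :: nat and \<xi> :: "nat \<Rightarrow> real"
    and x :: "int \<Rightarrow> real" and k :: int
    and U :: "int \<Rightarrow> nat \<Rightarrow> real \<Rightarrow> real^'n" and T :: "real set"
  assumes open_U: "open \<U>"
    \<comment> \<open>flux Jacobian and generalized Jacobian A = f_u + B\<close>
    and f_deriv: "\<forall>u\<in>\<U>. (f has_derivative (\<lambda>h. Jf u *v h)) (at u)"
    and A_def: "\<forall>u\<in>\<U>. A u = Jf u + B u"
    \<comment> \<open>entropy: strictly convex C^2 S with gradient w = S_u\<close>
    and S_convex: "strictly_convex_on \<U> S"
    and S_grad: "\<forall>u\<in>\<U>. (S has_derivative (\<lambda>h. w u \<bullet> h)) (at u)"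
    and w_deriv: "\<forall>u\<in>\<U>. (w has_derivative (\<lambda>h. H u *v h)) (at u)"
    and H_cont: "continuous_on \<U> H"
    \<comment> \<open>entropy flux: q_u = w^T (f_u + B)\<close>
    and q_deriv: "\<forall>u\<in>\<U>. (q has_derivative (\<lambda>h. w u \<bullet> (A u *v h))) (at u)"
    \<comment> \<open>family of Lipschitz paths\<close>
    and path_start: "\<forall>uL\<in>\<U>. \<forall>uR\<in>\<U>. \<Phi> 0 uL uR = uL"
    and path_end: "\<forall>uL\<in>\<U>. \<forall>uR\<in>\<U>. \<Phi> 1 uL uR = uR"
    and path_const: "\<forall>u\<in>\<U>. \<forall>s\<in>{0..1}. \<Phi> s u u = u"
    and path_lip: "\<forall>uL\<in>\<U>. \<forall>uR\<in>\<U>. \<exists>C. C-lipschitz_on {0..1} (\<lambda>s. \<Phi> s uL uR)"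
    and path_in: "\<forall>uL\<in>\<U>. \<forall>uR\<in>\<U>. \<forall>s\<in>{0..1}. \<Phi> s uL uR \<in> \<U>"
    \<comment> \<open>(C1)-(C5): entropy conservative fluctuations\<close>
    and C1: "\<forall>u\<in>\<U>. Dm u u = 0 \<and> Dp u u = 0"
    and C2: "\<forall>uL\<in>\<U>. \<forall>uR\<in>\<U>. Dm uL uR + Dp uL uR =
               integral {0..1} (\<lambda>s. A (\<Phi> s uL uR) *v
                 vector_derivative (\<lambda>s. \<Phi> s uL uR) (at s within {0..1}))"
    and C3: "\<forall>uL\<in>\<U>. \<forall>uR\<in>\<U>. Dm uL uR + Dp uR uL = 0"
    and C4: "\<forall>uL\<in>\<U>. \<forall>uR\<in>\<U>. w uL \<bullet> Dm uL uR + w uR \<bullet> Dp uL uR = q uR - q uL"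
    and C5: "\<forall>uL\<in>\<U>. ((\<lambda>uR. Dm uL uR) has_derivative (\<lambda>h. (1/2) *\<^sub>R (A uL *v h))) (at uL)"
    \<comment> \<open>dissipation matrix\<close>
    and Q_diss: "\<forall>uL\<in>\<U>. \<forall>uR\<in>\<U>. (w uR - w uL) \<bullet> (Q uL uR *v (uR - uL)) \<ge> 0"
    \<comment> \<open>LGL discretization with SBP property\<close>
    and N_pos: "N \<ge> 1"
    and nodes: "LGL_nodes N \<xi>"
    and SBP: "\<forall>i\<le>N. \<forall>j\<le>N. LGL_weight N \<xi> i * diff_matrix N \<xi> i j
                 + LGL_weight N \<xi> j * diff_matrix N \<xi> j i = bdry_matrix N i j"
    and mesh: "x (k - 1) < x k"
    \<comment> \<open>time-differentiable solution of the scheme on element k\<close>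
    and open_T: "open T"
    and U_diff: "\<forall>t\<in>T. \<forall>i\<le>N. U k i differentiable (at t)"
    and U_in: "\<forall>t\<in>T. (\<forall>i\<le>N. U k i t \<in> \<U>) \<and> U (k - 1) N t \<in> \<U> \<and> U (k + 1) 0 t \<in> \<U>"
    and scheme: "\<forall>t\<in>T. \<forall>i\<le>N.
        (LGL_weight N \<xi> i * (x k - x (k - 1)) / 2) *\<^sub>R vector_derivative (U k i) (at t)
        + (\<Sum>m\<le>N. (LGL_weight N \<xi> i * 2 * diff_matrix N \<xi> i m) *\<^sub>R Dm (U k i t) (U k m t))
        + (if i = 0 then DES_plus Dp Q (U (k - 1) N t) (U k 0 t) else 0)
        + (if i = N then DES_minus Dm Q (U k N t) (U (k + 1) 0 t) else 0) = 0"
  shows "(\<forall>t\<in>T. (\<Sum>i\<le>N. LGL_weight N \<xi> i * (x k - x (k - 1)) / 2 * deriv (\<lambda>\<tau>. S (U k i \<tau>)) t)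
            \<le> num_entropy_flux q w Dm Q (U (k - 1) N t) (U k 0 t)
              - num_entropy_flux q w Dm Q (U k N t) (U (k + 1) 0 t))
       \<and> (\<forall>u\<in>\<U>. num_entropy_flux q w Dm Q u u = q u)"
proof (intro conjI ballI)
  fix u assume "u \<in> \<U>"
  then show "num_entropy_flux q w Dm Q u u = q u"
    using C1 by (simp add: num_entropy_flux_consistent)
next
  have rows: "(\<Sum>m\<le>N. diff_matrix N \<xi> i m) = 0" for i
    using nodes sum_diff_matrix_row strict_mono_on_imp_inj_on unfolding LGL_nodes_def by blast
  fix t assume t: "t \<in> T"
  then have dS: "deriv (\<lambda>\<tau>. S (U k i \<tau>)) t = w (U k i t) \<bullet> vector_derivative (U k i) (at t)"
    if "i \<le> N" for i
    using that U_diff U_in S_grad by (blast intro: deriv_compose_gradient)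
  have "(\<Sum>i\<le>N. LGL_weight N \<xi> i * (x k - x (k - 1)) / 2 * deriv (\<lambda>\<tau>. S (U k i \<tau>)) t)
      = (\<Sum>i\<le>N. LGL_weight N \<xi> i * (x k - x (k - 1)) / 2
          * (w (U k i t) \<bullet> vector_derivative (U k i) (at t)))"
    using dS by (intro sum.cong) auto
  also have "\<dots> \<le> num_entropy_flux q w Dm Q (U (k - 1) N t) (U k 0 t)
      - num_entropy_flux q w Dm Q (U k N t) (U (k + 1) 0 t)"
    by (rule nodal_entropy_inequality[where \<U> = \<U> and \<omega> = "LGL_weight N \<xi>" and D = "diff_matrix N \<xi>"
          and Dp = Dp])
      (use t SBP rows U_in C1 C3 C4 Q_diss scheme in blast)+
  finally show "(\<Sum>i\<le>N. LGL_weight N \<xi> i * (x k - x (k - 1)) / 2 * deriv (\<lambda>\<tau>. S (U k i \<tau>)) t)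
      \<le> num_entropy_flux q w Dm Q (U (k - 1) N t) (U k 0 t)
        - num_entropy_flux q w Dm Q (U k N t) (U (k + 1) 0 t)" .
qed

end
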